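(* Let $p$ be a probability rule for unnormalised quantum many-worlds theory satisfying Axioms (A1)–(A3). Then for every allowed state $v=\sum_n v_n\lvert n\rangle$ and every $n\ge0$, $p_n(v)=\dfrac{|v_n|^2}{\sum_m|v_m|^2}$.
   Context: Unnormalised quantum many-worlds theory is defined as follows. The worlds are the vectors $\lvert n\rangle$, $n\in\{0,1,2,\dots\}$, of a countably infinite orthonormal basis of a complex Hilbert space. The allowed states are the vectors $v=\sum_n v_n\lvert n\rangle$ with $0<\sum_n|v_n|^2<\infty$, where $v_n=\langle n\vert v\rangle$ is the amplitude of world $n$. The allowed transformations are all unitary operators $T$, with matrix elements $T_{ij}=\langle i\rvert T\lvert j\rangle$. A probability rule assigns to each allowed state $v$ a sequence $(p_n(v))_{n\ge 0}$ of nonnegative reals with $\sum_n p_n(v)=1$. The axioms are: (A1) Present state dependence: $p_n$ depends only on the present state $v$, so $p$ is a function of the state alone. (A2) Weak connection with amplitudes: for every allowed state $v$, $v_n=0$ implies $p_n(v)=0$. (A3) Weak connection with transformations: for every allowed state $v$ and allowed transformation $T$, and every partition of $\{0,1,2,\dots\}$ into subsets $\mathcal S_k$ such that $T_{ij}=0$ whenever $i$ and $j$ lie in different subsets, we have $\sum_{n\in\mathcal S_k}p_n(v)=\sum_{n\in\mathcal S_k}p_n(Tv)$ for every $k$. *)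

theory Defs
  imports "HOL-Analysis.Analysis"
begin

text \<open>Vectors of the Hilbert space are represented by their amplitude sequences
  v :: nat \<Rightarrow> complex, v n = amplitude of world n; the Hilbert space is l2(nat).\<close>

definition sq_summable :: "(nat \<Rightarrow> complex) \<Rightarrow> bool" where
  "sq_summable v \<longleftrightarrow> summable (\<lambda>n. (cmod (v n))\<^sup>2)"

definition sqnorm :: "(nat \<Rightarrow> complex) \<Rightarrow> real" where
  "sqnorm v = (\<Sum>n. (cmod (v n))\<^sup>2)"

definition allowed_state :: "(nat \<Rightarrow> complex) \<Rightarrow> bool" where
  "allowed_state v \<longleftrightarrow> sq_summable v \<and> sqnorm v > 0"

definition unitary_op :: "((nat \<Rightarrow> complex) \<Rightarrow> (nat \<Rightarrow> complex)) \<Rightarrow> bool" where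
  "unitary_op T \<longleftrightarrow>
     (\<forall>v. sq_summable v \<longrightarrow> sq_summable (T v)) \<and>
     (\<forall>v w. sq_summable v \<longrightarrow> sq_summable w \<longrightarrow> T (\<lambda>n. v n + w n) = (\<lambda>n. T v n + T w n)) \<and>
     (\<forall>c v. sq_summable v \<longrightarrow> T (\<lambda>n. c * v n) = (\<lambda>n. c * T v n)) \<and>
     (\<forall>v. sq_summable v \<longrightarrow> sqnorm (T v) = sqnorm v) \<and>
     (\<forall>w. sq_summable w \<longrightarrow> (\<exists>v. sq_summable v \<and> T v = w))"

definition ket :: "nat \<Rightarrow> nat \<Rightarrow> complex" where
  "ket j = (\<lambda>k. if k = j then 1 else 0)"

definition mat_el :: "((nat \<Rightarrow> complex) \<Rightarrow> (nat \<Rightarrow> complex)) \<Rightarrow> nat \<Rightarrow> nat \<Rightarrow> complex" where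
  "mat_el T i j = T (ket j) i"

text \<open>A probability rule (A1: a function of the present state only).\<close>
definition prob_rule :: "((nat \<Rightarrow> complex) \<Rightarrow> nat \<Rightarrow> real) \<Rightarrow> bool" where
  "prob_rule p \<longleftrightarrow> (\<forall>v. allowed_state v \<longrightarrow> (\<forall>n. p v n \<ge> 0) \<and> p v sums 1)"

definition axiom_A2 :: "((nat \<Rightarrow> complex) \<Rightarrow> nat \<Rightarrow> real) \<Rightarrow> bool" where
  "axiom_A2 p \<longleftrightarrow> (\<forall>v n. allowed_state v \<longrightarrow> v n = 0 \<longrightarrow> p v n = 0)"

text \<open>Partitions of nat into (at most countably many) subsets S_k = {n. sigma n = k}.\<close>
definition axiom_A3 :: "((nat \<Rightarrow> complex) \<Rightarrow> nat \<Rightarrow> real) \<Rightarrow> bool" where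
  "axiom_A3 p \<longleftrightarrow> (\<forall>v T (\<sigma>::nat \<Rightarrow> nat).
      allowed_state v \<longrightarrow> unitary_op T \<longrightarrow>
      (\<forall>i j. \<sigma> i \<noteq> \<sigma> j \<longrightarrow> mat_el T i j = 0) \<longrightarrow>
      (\<forall>k. infsum (p v) {n. \<sigma> n = k} = infsum (p (T v)) {n. \<sigma> n = k}))"

end

theory Submission
  imports Defs
begin

text \<open>Applied to unitaries that act only on a finite set of worlds, (A3) shows that the total
  probability of that set does not change when its amplitudes are rearranged with the same squared
  norm; such rearrangements are composed of 2x2 rotations, gathering the weight in one world first.
  With (A2), an amplitude can be moved through an empty world, so equal amplitudes receive equal
  probabilities. Spreading \<open>|v\<^sub>n|\<^sup>2\<close> evenly over \<open>k\<close> worlds and recasting the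
  weight of the other worlds below \<open>M\<close> as \<open>l\<close> further worlds with the same amplitude, where
  \<open>l\<close> is about \<open>k\<close> times the ratio of the two weights, gives \<open>p\<^sub>n(v) (k + l) \<le> k\<close>.
  Letting \<open>k = M \<rightarrow> \<infinity>\<close> yields \<open>p\<^sub>n(v) \<le> |v\<^sub>n|\<^sup>2 / \<Sum>\<^sub>m |v\<^sub>m|\<^sup>2\<close>, and
  equality follows because both sides sum to 1 over \<open>n\<close>.\<close>

lemma sq_summable_sqnorm_finite_change:
  assumes "sq_summable w" "finite F" "\<And>k. k \<notin> F \<Longrightarrow> w' k = w k"
    and "(\<Sum>k\<in>F. (cmod (w' k))\<^sup>2) = (\<Sum>k\<in>F. (cmod (w k))\<^sup>2)"
  shows "sq_summable w'" "sqnorm w' = sqnorm w"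
proof -
  define d where "d k = (cmod (w' k))\<^sup>2 - (cmod (w k))\<^sup>2" for k
  have "d sums (\<Sum>k\<in>F. d k)"
    by (rule sums_finite[OF assms(2)]) (simp add: d_def assms(3))
  moreover have "(\<Sum>k\<in>F. d k) = 0"
    using assms(4) by (simp add: d_def sum_subtractf)
  moreover have "(\<lambda>k. (cmod (w k))\<^sup>2) sums sqnorm w"
    using assms(1) by (simp add: sq_summable_def sqnorm_def summable_sums)
  ultimately have "(\<lambda>k. (cmod (w k))\<^sup>2 + d k) sums sqnorm w"
    using sums_add by fastforce
  then show "sq_summable w'" "sqnorm w' = sqnorm w"
    by (simp_all add: d_def sq_summable_def sqnorm_def sums_iff)
qed

lemma allowed_state_finite_change:
  assumes "allowed_state w" "finite F" "\<And>k. k \<notin> F \<Longrightarrow> w' k = w k"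
    and "(\<Sum>k\<in>F. (cmod (w' k))\<^sup>2) = (\<Sum>k\<in>F. (cmod (w k))\<^sup>2)"
  shows "allowed_state w'"
  using assms sq_summable_sqnorm_finite_change[of w F w']
  by (simp add: allowed_state_def)

lemma cmod_rotation_identity:
  fixes a b x y :: complex
  shows "(cmod (a * x - cnj b * y))\<^sup>2 + (cmod (b * x + cnj a * y))\<^sup>2
    = ((cmod a)\<^sup>2 + (cmod b)\<^sup>2) * ((cmod x)\<^sup>2 + (cmod y)\<^sup>2)"
  unfolding cmod_power2 by (simp add: power2_eq_square) algebra

definition rotation :: "nat \<Rightarrow> nat \<Rightarrow> complex \<Rightarrow> complex \<Rightarrow> (nat \<Rightarrow> complex) \<Rightarrow> nat \<Rightarrow> complex"
  where "rotation i j a b w =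
    (\<lambda>k. if k = i then a * w i - cnj b * w j else if k = j then b * w i + cnj a * w j else w k)"

lemma rotation_outside: "k \<noteq> i \<Longrightarrow> k \<noteq> j \<Longrightarrow> rotation i j a b w k = w k"
  by (simp add: rotation_def)

lemma rotation_vanishing: "w i = 0 \<Longrightarrow> w j = 0 \<Longrightarrow> rotation i j a b w = w"
  by (simp add: rotation_def fun_eq_iff)

lemma rotation_inverse:
  assumes "(cmod a)\<^sup>2 + (cmod b)\<^sup>2 = 1" "i \<noteq> j"
  shows "rotation i j (cnj a) (- b) (rotation i j a b w) = w"
proof -
  have "cnj a * a + cnj b * b = 1"
    using assms(1) by (metis complex_norm_square mult.commute of_real_1 of_real_add)
  moreover have "cnj a * (a * x - cnj b * y) + cnj b * (b * x + cnj a * y) = (cnj a * a + cnj b * b) * x"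
    and "- b * (a * x - cnj b * y) + a * (b * x + cnj a * y) = (cnj a * a + cnj b * b) * y"
    for x y :: complex
    by (simp_all add: algebra_simps)
  ultimately show ?thesis
    using assms(2) by (simp add: rotation_def fun_eq_iff)
qed

lemma rotation_sq_summable_sqnorm:
  assumes "sq_summable w" "i \<noteq> j" "(cmod a)\<^sup>2 + (cmod b)\<^sup>2 = 1"
  shows "sq_summable (rotation i j a b w)" "sqnorm (rotation i j a b w) = sqnorm w"
proof -
  have "(\<Sum>k\<in>{i, j}. (cmod (rotation i j a b w k))\<^sup>2) = (\<Sum>k\<in>{i, j}. (cmod (w k))\<^sup>2)"
    using assms(2) cmod_rotation_identity[of a "w i" b "w j"] by (simp add: rotation_def assms(3))
  moreover have "\<And>k. k \<notin> {i, j} \<Longrightarrow> rotation i j a b w k = w k"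
    by (simp add: rotation_def)
  ultimately show "sq_summable (rotation i j a b w)" "sqnorm (rotation i j a b w) = sqnorm w"
    using sq_summable_sqnorm_finite_change[OF assms(1), of "{i, j}"] by blast+
qed

lemma unitary_op_rotation:
  assumes "i \<noteq> j" "(cmod a)\<^sup>2 + (cmod b)\<^sup>2 = 1"
  shows "unitary_op (rotation i j a b)"
  unfolding unitary_op_def
proof (intro conjI allI impI)
  fix w :: "nat \<Rightarrow> complex" assume w: "sq_summable w"
  then show "sq_summable (rotation i j a b w)" "sqnorm (rotation i j a b w) = sqnorm w"
    using rotation_sq_summable_sqnorm[OF _ assms] by auto
  have inv: "(cmod (cnj a))\<^sup>2 + (cmod (- b))\<^sup>2 = 1"
    using assms(2) by simp
  show "\<exists>v. sq_summable v \<and> rotation i j a b v = w"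
    using rotation_sq_summable_sqnorm[OF w assms(1) inv] rotation_inverse[OF inv assms(1)]
    by (metis complex_cnj_cnj minus_minus)
next
  fix v w :: "nat \<Rightarrow> complex" and c :: complex
  show "rotation i j a b (\<lambda>n. v n + w n) = (\<lambda>n. rotation i j a b v n + rotation i j a b w n)"
    and "rotation i j a b (\<lambda>n. c * v n) = (\<lambda>n. c * rotation i j a b v n)"
    by (simp_all add: rotation_def fun_eq_iff algebra_simps)
qed

lemma rotation_exists:
  fixes x1 x2 y1 y2 :: complex
  assumes "(cmod y1)\<^sup>2 + (cmod y2)\<^sup>2 = (cmod x1)\<^sup>2 + (cmod x2)\<^sup>2"
  obtains a b where "(cmod a)\<^sup>2 + (cmod b)\<^sup>2 = 1"
    "a * x1 - cnj b * x2 = y1" "b * x1 + cnj a * x2 = y2"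
proof (cases "(cmod x1)\<^sup>2 + (cmod x2)\<^sup>2 = 0")
  case True
  then have "x1 = 0" "x2 = 0" "y1 = 0" "y2 = 0"
    using assms by (simp_all add: add_nonneg_eq_0_iff)
  then show ?thesis
    using that[of 1 0] by simp
next
  case False
  define r where "r = (cmod x1)\<^sup>2 + (cmod x2)\<^sup>2"
  have r: "r > 0"
    using False by (simp add: r_def add_pos_nonneg order_le_neq_trans)
  define R where "R = x1 * cnj x1 + x2 * cnj x2"
  have R: "R = complex_of_real r"
    unfolding R_def r_def of_real_add complex_norm_square ..
  then have "R \<noteq> 0"
    using r by simp
  define a where "a = (y1 * cnj x1 + cnj y2 * x2) / R"
  define b where "b = (y2 * cnj x1 - cnj y1 * x2) / R"
  have "cmod R = r"
    using r by (simp add: R)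
  then have "(cmod a)\<^sup>2 + (cmod b)\<^sup>2
      = ((cmod (y1 * cnj x1 + cnj y2 * x2))\<^sup>2 + (cmod (y2 * cnj x1 - cnj y1 * x2))\<^sup>2) / r\<^sup>2"
    unfolding a_def b_def norm_divide power_divide by (simp add: add_divide_distrib)
  also have "\<dots> = ((cmod y1)\<^sup>2 + (cmod y2)\<^sup>2) * r / r\<^sup>2"
    using cmod_rotation_identity[of y1 "cnj x1" "- y2" x2] by (simp add: r_def norm_minus_commute)
  also have "\<dots> = 1"
    using r unfolding assms r_def[symmetric] by (simp add: power2_eq_square)
  finally show ?thesis
  proof (rule that)
    have "cnj R = R"
      by (simp add: R_def)
    then have ca: "cnj a = (cnj y1 * x1 + y2 * cnj x2) / R"
      and cb: "cnj b = (cnj y2 * x1 - y1 * cnj x2) / R"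
      by (simp_all add: a_def b_def)
    have "a * x1 - cnj b * x2
        = ((y1 * cnj x1 + cnj y2 * x2) * x1 - (cnj y2 * x1 - y1 * cnj x2) * x2) / R"
      unfolding cb a_def using \<open>R \<noteq> 0\<close> by (simp add: field_simps)
    also have "\<dots> = y1 * R / R"
      by (simp add: R_def algebra_simps)
    finally show "a * x1 - cnj b * x2 = y1"
      using \<open>R \<noteq> 0\<close> by simp
    have "b * x1 + cnj a * x2
        = ((y2 * cnj x1 - cnj y1 * x2) * x1 + (cnj y1 * x1 + y2 * cnj x2) * x2) / R"
      unfolding ca b_def using \<open>R \<noteq> 0\<close> by (simp add: field_simps)
    also have "\<dots> = y2 * R / R"
      by (simp add: R_def algebra_simps)
    finally show "b * x1 + cnj a * x2 = y2"
      using \<open>R \<noteq> 0\<close> by simp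
  qed
qed

lemma prob_local_unitary:
  assumes A3: "axiom_A3 p" and v: "allowed_state v" and T: "unitary_op T" and H: "finite H"
    and outside: "\<And>w k. k \<notin> H \<Longrightarrow> T w k = w k"
    and vanishing: "\<And>w. (\<And>k. k \<in> H \<Longrightarrow> w k = 0) \<Longrightarrow> T w = w"
  shows "(\<Sum>k\<in>H. p (T v) k) = (\<Sum>k\<in>H. p v k)" "k \<notin> H \<Longrightarrow> p (T v) k = p v k"
proof -
  consider "H = {}" | h where "h \<in> H"
    by blast
  then have "(\<Sum>k\<in>H. p (T v) k) = (\<Sum>k\<in>H. p v k) \<and> (k \<notin> H \<longrightarrow> p (T v) k = p v k)"
  proof cases
    case 1
    then have "T v = v"
      using outside by (simp add: fun_eq_iff)
    then show ?thesis
      by simp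
  next
    case (2 h)
    define \<sigma> where "\<sigma> k = (if k \<in> H then h else k)" for k
    have "mat_el T a b = 0" if ne: "\<sigma> a \<noteq> \<sigma> b" for a b
    proof (cases "b \<in> H")
      case True
      then have "a \<notin> H"
        using ne by (auto simp: \<sigma>_def)
      then show ?thesis
        using True outside by (auto simp: mat_el_def ket_def)
    next
      case False
      then have "T (ket b) = ket b"
        by (intro vanishing) (auto simp: ket_def)
      moreover have "a \<noteq> b"
        using ne by auto
      ultimately show ?thesis
        by (simp add: mat_el_def ket_def)
    qed
    then have blocks: "infsum (p v) {n. \<sigma> n = c} = infsum (p (T v)) {n. \<sigma> n = c}" for c
      using A3 v T unfolding axiom_A3_def by blast
    have "{n. \<sigma> n = h} = H" "k \<notin> H \<Longrightarrow> {n. \<sigma> n = k} = {k}"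
      using 2 by (auto simp: \<sigma>_def)
    then show ?thesis
      using blocks[of h] blocks[of k] H by auto
  qed
  then show "(\<Sum>k\<in>H. p (T v) k) = (\<Sum>k\<in>H. p v k)" "k \<notin> H \<Longrightarrow> p (T v) k = p v k"
    by auto
qed

lemma prob_pair_move:
  assumes A3: "axiom_A3 p" and v: "allowed_state v" and ij: "i \<noteq> j"
    and outside: "\<And>k. k \<noteq> i \<Longrightarrow> k \<noteq> j \<Longrightarrow> v' k = v k"
    and norm: "(cmod (v' i))\<^sup>2 + (cmod (v' j))\<^sup>2 = (cmod (v i))\<^sup>2 + (cmod (v j))\<^sup>2"
  shows "allowed_state v'" "p v' i + p v' j = p v i + p v j"
    "k \<noteq> i \<Longrightarrow> k \<noteq> j \<Longrightarrow> p v' k = p v k"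
proof -
  obtain a b where ab: "(cmod a)\<^sup>2 + (cmod b)\<^sup>2 = 1"
    "a * v i - cnj b * v j = v' i" "b * v i + cnj a * v j = v' j"
    using rotation_exists[OF norm] .
  have v': "rotation i j a b v = v'"
    using ab outside by (auto simp: rotation_def fun_eq_iff)
  note local = prob_local_unitary[OF A3 v unitary_op_rotation[OF ij ab(1)], of "{i, j}"]
  show "p v' i + p v' j = p v i + p v j" "k \<noteq> i \<Longrightarrow> k \<noteq> j \<Longrightarrow> p v' k = p v k"
    using local rotation_outside rotation_vanishing ij unfolding v' by auto
  show "allowed_state v'"
    using allowed_state_finite_change[OF v, of "{i, j}"] outside norm ij by auto
qed

lemma axiom_A2D: "axiom_A2 p \<Longrightarrow> allowed_state v \<Longrightarrow> v n = 0 \<Longrightarrow> p v n = 0"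
  by (simp add: axiom_A2_def)

lemma prob_eq_if_amplitudes_eq:
  assumes A2: "axiom_A2 p" and A3: "axiom_A3 p" and v: "allowed_state v"
    and distinct: "i \<noteq> j" "i \<noteq> z" "j \<noteq> z" and eq: "v i = v j" and vacant: "v z = 0"
  shows "p v i = p v j"
proof -
  define u1 where "u1 = v(i := 0, z := v i)"
  have u1: "allowed_state u1" "p u1 i + p u1 z = p v i + p v z"
    using prob_pair_move[OF A3 v distinct(2), of u1] vacant by (auto simp: u1_def)
  define u2 where "u2 = u1(i := v i, j := 0)"
  have u2: "allowed_state u2" "p u2 z = p u1 z"
    using prob_pair_move[OF A3 u1(1) distinct(1), of u2] distinct eq by (auto simp: u2_def u1_def)
  have "p v z + p v j = p u2 z + p u2 j"
    using prob_pair_move[OF A3 u2(1) distinct(3)[symmetric], of v] distinct eq vacant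
    by (auto simp: u2_def u1_def)
  moreover have "p v z = 0" "p u1 i = 0" "p u2 j = 0"
    using axiom_A2D[OF A2] v u1(1) u2(1) vacant distinct by (auto simp: u1_def u2_def)
  ultimately show ?thesis
    using u1(2) u2(2) by simp
qed

definition gather :: "nat \<Rightarrow> nat \<Rightarrow> (nat \<Rightarrow> complex) \<Rightarrow> nat \<Rightarrow> complex"
  where "gather m x w = w(m := complex_of_real (sqrt ((cmod (w m))\<^sup>2 + (cmod (w x))\<^sup>2)), x := 0)"

lemma prob_gather:
  assumes A2: "axiom_A2 p" and A3: "axiom_A3 p" and w: "allowed_state w" and mx: "m \<noteq> x"
  shows "allowed_state (gather m x w)" "p (gather m x w) m = p w m + p w x"
    "k \<noteq> m \<Longrightarrow> k \<noteq> x \<Longrightarrow> p (gather m x w) k = p w k"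
proof -
  note move = prob_pair_move[OF A3 w mx, of "gather m x w"]
  show "allowed_state (gather m x w)" "k \<noteq> m \<Longrightarrow> k \<noteq> x \<Longrightarrow> p (gather m x w) k = p w k"
    using move mx by (simp_all add: gather_def)
  moreover have "p (gather m x w) x = 0"
    using axiom_A2D[OF A2] calculation(1) by (simp add: gather_def)
  ultimately show "p (gather m x w) m = p w m + p w x"
    using move mx by (simp add: gather_def)
qed

definition concentrate :: "nat \<Rightarrow> nat set \<Rightarrow> (nat \<Rightarrow> complex) \<Rightarrow> nat \<Rightarrow> complex"
  where "concentrate m F v = (\<lambda>k. if k = m then complex_of_real (sqrt (\<Sum>l\<in>insert m F. (cmod (v l))\<^sup>2))
    else if k \<in> F then 0 else v k)"

lemma concentrate_singleton: "m \<noteq> x \<Longrightarrow> concentrate m {x} v = gather m x v"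
  by (simp add: concentrate_def gather_def fun_eq_iff)

lemma concentrate_insert:
  assumes "finite F" "m \<notin> F" "x \<notin> insert m F"
  shows "concentrate m (insert x F) v = gather m x (concentrate m F v)"
proof -
  have "(cmod (concentrate m F v m))\<^sup>2 + (cmod (concentrate m F v x))\<^sup>2
      = (\<Sum>l\<in>insert m (insert x F). (cmod (v l))\<^sup>2)"
    using assms by (simp add: concentrate_def sum_nonneg insert_commute[of m x])
  then show ?thesis
    using assms by (simp add: concentrate_def gather_def fun_eq_iff)
qed

lemma prob_concentrate:
  assumes A2: "axiom_A2 p" and A3: "axiom_A3 p" and v: "allowed_state v"
    and F: "finite F" "F \<noteq> {}" "m \<notin> F"
  shows "allowed_state (concentrate m F v)" "p (concentrate m F v) m = (\<Sum>k\<in>insert m F. p v k)"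
    "k \<notin> insert m F \<Longrightarrow> p (concentrate m F v) k = p v k"
proof -
  have "allowed_state (concentrate m F v) \<and> p (concentrate m F v) m = (\<Sum>k\<in>insert m F. p v k)
    \<and> (\<forall>k. k \<notin> insert m F \<longrightarrow> p (concentrate m F v) k = p v k)"
    using F
  proof (induction F rule: finite_ne_induct)
    case (singleton x)
    then show ?case
      using prob_gather[OF A2 A3 v, of m x] by (simp add: concentrate_singleton)
  next
    case (insert x F)
    then have mx: "m \<noteq> x"
      by auto
    show ?case
      using insert prob_gather[OF A2 A3 _ mx, of "concentrate m F v"]
      by (simp add: concentrate_insert insert_commute[of m x])
  qed
  then show "allowed_state (concentrate m F v)" "p (concentrate m F v) m = (\<Sum>k\<in>insert m F. p v k)"
    "k \<notin> insert m F \<Longrightarrow> p (concentrate m F v) k = p v k"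
    by auto
qed

lemma prob_finite_move:
  assumes A2: "axiom_A2 p" and A3: "axiom_A3 p" and v: "allowed_state v"
    and H: "finite H" "i \<in> H" "j \<in> H" "i \<noteq> j"
    and outside: "\<And>k. k \<notin> H \<Longrightarrow> v' k = v k"
    and norm: "(\<Sum>k\<in>H. (cmod (v' k))\<^sup>2) = (\<Sum>k\<in>H. (cmod (v k))\<^sup>2)"
  shows "allowed_state v'" "(\<Sum>k\<in>H. p v' k) = (\<Sum>k\<in>H. p v k)" "k \<notin> H \<Longrightarrow> p v' k = p v k"
proof -
  show v': "allowed_state v'"
    using allowed_state_finite_change[OF v H(1) outside norm] .
  define F where "F = H - {i}"
  have F: "finite F" "F \<noteq> {}" "i \<notin> F" "insert i F = H"
    using H by (auto simp: F_def)
  have "concentrate i F v' = concentrate i F v"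
    using F(4) norm outside by (auto simp: concentrate_def fun_eq_iff F_def)
  then show "(\<Sum>k\<in>H. p v' k) = (\<Sum>k\<in>H. p v k)" "k \<notin> H \<Longrightarrow> p v' k = p v k"
    using prob_concentrate[OF A2 A3 v F(1-3)] prob_concentrate[OF A2 A3 v' F(1-3)] F(4)
    by metis+
qed

lemma prob_rule_nonneg: "prob_rule p \<Longrightarrow> allowed_state v \<Longrightarrow> 0 \<le> p v n"
  by (simp add: prob_rule_def)

lemma prob_rule_sums: "prob_rule p \<Longrightarrow> allowed_state v \<Longrightarrow> p v sums 1"
  by (simp add: prob_rule_def)

lemma prob_sum_le_one:
  assumes "prob_rule p" "allowed_state v" "finite E"
  shows "(\<Sum>q\<in>E. p v q) \<le> 1"
proof -
  have "(\<Sum>q\<in>E. p v q) \<le> suminf (p v)"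
    using prob_rule_sums[OF assms(1,2)] prob_rule_nonneg[OF assms(1,2)] assms(3)
    by (intro sum_le_suminf) (auto simp: sums_iff)
  then show ?thesis
    using prob_rule_sums[OF assms(1,2)] by (simp add: sums_iff)
qed

lemma prob_spread:
  assumes A2: "axiom_A2 p" and A3: "axiom_A3 p" and v: "allowed_state v"
    and E: "finite E" "n \<in> E" "z \<notin> E"
    and vacant: "\<And>q. q \<in> E - {n} \<Longrightarrow> v q = 0" "v z = 0"
    and outside: "\<And>q. q \<notin> insert z E \<Longrightarrow> v' q = v q" and "v' z = 0"
    and norm: "(\<Sum>q\<in>E. (cmod (v' q))\<^sup>2) = (cmod (v n))\<^sup>2"
  shows "allowed_state v'" "(\<Sum>q\<in>E. p v' q) = p v n"
proof -
  have nz: "n \<noteq> z"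
    using E by auto
  have "(\<Sum>q\<in>E. (cmod (v q))\<^sup>2) = (cmod (v n))\<^sup>2"
    using E vacant(1) by (simp add: sum.remove)
  then have "(\<Sum>q\<in>insert z E. (cmod (v' q))\<^sup>2) = (\<Sum>q\<in>insert z E. (cmod (v q))\<^sup>2)"
    using E norm vacant(2) \<open>v' z = 0\<close> by simp
  note move = prob_finite_move[OF A2 A3 v _ _ _ nz outside this]
  show v': "allowed_state v'"
    using move E by simp
  have "p v' z = 0" "p v z = 0" "\<And>q. q \<in> E - {n} \<Longrightarrow> p v q = 0"
    using axiom_A2D[OF A2] v v' vacant \<open>v' z = 0\<close> by auto
  then show "(\<Sum>q\<in>E. p v' q) = p v n"
    using move(2) E by (simp add: sum.remove)
qed

lemma prob_uniform_bound:
  assumes P: "prob_rule p" and A2: "axiom_A2 p" and A3: "axiom_A3 p" and u: "allowed_state u"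
    and E: "finite E" "E' \<subseteq> E" and z: "z \<notin> E" "u z = 0"
    and uniform: "\<And>q. q \<in> E \<Longrightarrow> u q = c"
  shows "real (card E) * (\<Sum>q\<in>E'. p u q) \<le> real (card E')"
proof (cases "E' = {}")
  case False
  then obtain n where n: "n \<in> E'"
    by blast
  have same: "p u q = p u n" if q: "q \<in> E" for q
  proof (cases "q = n")
    case False
    have "q \<noteq> z" "n \<noteq> z" "u q = u n"
      using q n E z uniform by auto
    then show ?thesis
      using prob_eq_if_amplitudes_eq[OF A2 A3 u False] z(2) by blast
  qed simp
  have "(\<Sum>q\<in>E'. p u q) = (\<Sum>q\<in>E'. p u n)"
    by (rule sum.cong) (use same E(2) in auto)
  moreover have "(\<Sum>q\<in>E. p u q) = (\<Sum>q\<in>E. p u n)"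
    by (rule sum.cong) (use same in auto)
  ultimately have "(\<Sum>q\<in>E'. p u q) = real (card E') * p u n" "(\<Sum>q\<in>E. p u q) = real (card E) * p u n"
    by simp_all
  moreover have "(\<Sum>q\<in>E. p u q) \<le> 1"
    using prob_sum_le_one[OF P u E(1)] .
  ultimately show ?thesis
    using mult_left_mono[of "real (card E) * p u n" 1 "real (card E')"] by (simp add: algebra_simps)
qed simp

lemma prob_reshape:
  assumes A2: "axiom_A2 p" and A3: "axiom_A3 p" and v: "allowed_state v"
    and H: "finite H" "E \<subseteq> H" "r \<in> H" "r \<notin> E" "z \<in> H" "z \<noteq> r"
    and weight: "real (card E) * (cmod c)\<^sup>2 \<le> (\<Sum>q\<in>H. (cmod (v q))\<^sup>2)"
  obtains u where "allowed_state u" "\<And>q. q \<in> E \<Longrightarrow> u q = c" "\<And>q. q \<in> H - insert r E \<Longrightarrow> u q = 0"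
    "\<And>q. q \<notin> H \<Longrightarrow> u q = v q" "\<And>q. q \<notin> H \<Longrightarrow> p u q = p v q"
proof -
  define rest where "rest = (\<Sum>q\<in>H. (cmod (v q))\<^sup>2) - real (card E) * (cmod c)\<^sup>2"
  define u where "u q = (if q \<in> H then (if q \<in> E then c else if q = r then complex_of_real (sqrt rest) else 0)
    else v q)" for q
  have "(\<Sum>q\<in>H. (cmod (u q))\<^sup>2) = (\<Sum>q\<in>H. (if q \<in> E then (cmod c)\<^sup>2 else 0) + (if q = r then rest else 0))"
    by (rule sum.cong) (use H weight in \<open>auto simp: u_def rest_def\<close>)
  also have "\<dots> = real (card E) * (cmod c)\<^sup>2 + rest"
    using sum.inter_restrict[OF H(1), of "\<lambda>_. (cmod c)\<^sup>2" E] H by (simp add: sum.distrib Int_absorb1)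
  finally have "(\<Sum>q\<in>H. (cmod (u q))\<^sup>2) = (\<Sum>q\<in>H. (cmod (v q))\<^sup>2)"
    by (simp add: rest_def)
  moreover have "\<And>q. q \<notin> H \<Longrightarrow> u q = v q"
    by (simp add: u_def)
  ultimately show ?thesis
    using prob_finite_move[OF A2 A3 v H(1) H(5,3,6), of u] H
    by (intro that[of u]) (auto simp: u_def)
qed

lemma prob_split_bound:
  assumes P: "prob_rule p" and A2: "axiom_A2 p" and A3: "axiom_A3 p" and v: "allowed_state v"
    and "n < M" "1 \<le> k"
    and l: "real l * (cmod (v n))\<^sup>2 \<le> real k * (\<Sum>q\<in>{..<M} - {n}. (cmod (v q))\<^sup>2)"
  shows "p v n * (real k + real l) \<le> real k"
proof -
  define c where "c = complex_of_real (sqrt ((cmod (v n))\<^sup>2 / real k))"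
  have c: "real k * (cmod c)\<^sup>2 = (cmod (v n))\<^sup>2"
    using \<open>1 \<le> k\<close> by (simp add: c_def)
  \<comment> \<open>The weight of the worlds in \<open>H\<close> is recast as \<open>l\<close> copies of \<open>c\<close> on \<open>E2\<close> (plus a reservoir
    world \<open>r\<close>); then the weight of \<open>n\<close> is spread as \<open>k\<close> copies of \<open>c\<close> on \<open>E1\<close>.\<close>
  define z where "z = M"
  define E1 where "E1 = insert n {M + 1..<M + k}"
  define E2 where "E2 = {M + k..<M + k + l}"
  define r where "r = M + k + l"
  define H where "H = {..r} - {n}"
  have E: "finite E1" "finite E2" "card E1 = k" "card E2 = l" "E1 \<inter> E2 = {}"
    "n \<in> E1" "z \<notin> E1" "z \<notin> E2" "E2 \<subseteq> H" "finite H" "r \<in> H" "r \<notin> E2" "z \<in> H" "z \<noteq> r"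
    using \<open>n < M\<close> \<open>1 \<le> k\<close> by (auto simp: E1_def E2_def H_def z_def r_def)
  have "real k * (real l * (cmod c)\<^sup>2) \<le> real k * (\<Sum>q\<in>{..<M} - {n}. (cmod (v q))\<^sup>2)"
    using l unfolding c[symmetric] by (simp add: algebra_simps)
  then have "real (card E2) * (cmod c)\<^sup>2 \<le> (\<Sum>q\<in>{..<M} - {n}. (cmod (v q))\<^sup>2)"
    using \<open>1 \<le> k\<close> E by simp
  also have "\<dots> \<le> (\<Sum>q\<in>H. (cmod (v q))\<^sup>2)"
    by (rule sum_mono2) (auto simp: H_def r_def)
  finally obtain u1 where u1: "allowed_state u1" "\<And>q. q \<in> E2 \<Longrightarrow> u1 q = c"
    "\<And>q. q \<in> H - insert r E2 \<Longrightarrow> u1 q = 0"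
    "\<And>q. q \<notin> H \<Longrightarrow> u1 q = v q" "\<And>q. q \<notin> H \<Longrightarrow> p u1 q = p v q"
    using prob_reshape[OF A2 A3 v E(10,9,11,12,13,14)] by blast
  have "n \<notin> H"
    by (simp add: H_def)
  define u2 where "u2 q = (if q \<in> E1 then c else u1 q)" for q
  have "insert z E1 - {n} \<subseteq> H - insert r E2"
    using \<open>n < M\<close> \<open>1 \<le> k\<close> by (auto simp: E1_def E2_def H_def z_def r_def)
  then have "\<And>q. q \<in> E1 - {n} \<Longrightarrow> u1 q = 0" "u1 z = 0"
    using u1(3) E by auto
  moreover have "\<And>q. q \<notin> insert z E1 \<Longrightarrow> u2 q = u1 q" "u2 z = 0"
    using E \<open>u1 z = 0\<close> by (simp_all add: u2_def)
  moreover have "(\<Sum>q\<in>E1. (cmod (u2 q))\<^sup>2) = (cmod (u1 n))\<^sup>2"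
    using E c u1(4)[OF \<open>n \<notin> H\<close>] by (simp add: u2_def)
  ultimately have u2: "allowed_state u2" "(\<Sum>q\<in>E1. p u2 q) = p v n"
    using prob_spread[OF A2 A3 u1(1) E(1,6,7)] u1(5)[OF \<open>n \<notin> H\<close>] by simp_all
  have "real (card (E1 \<union> E2)) * (\<Sum>q\<in>E1. p u2 q) \<le> real (card E1)"
    using E u1(2) \<open>u2 z = 0\<close>
    by (intro prob_uniform_bound[OF P A2 A3 u2(1), of _ _ z c]) (auto simp: u2_def)
  then show ?thesis
    using u2(2) E by (simp add: card_Un_disjoint algebra_simps)
qed

lemma prob_mul_sqnorm_le:
  assumes P: "prob_rule p" and A2: "axiom_A2 p" and A3: "axiom_A3 p" and v: "allowed_state v"
  shows "p v n * sqnorm v \<le> (cmod (v n))\<^sup>2"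
proof (cases "v n = 0")
  case True
  then show ?thesis
    using axiom_A2D[OF A2 v] by simp
next
  case False
  define A where "A = (cmod (v n))\<^sup>2"
  define B where "B M = (\<Sum>q<M. (cmod (v q))\<^sup>2) - A" for M
  define x where "x = p v n"
  have A: "0 < A"
    using False by (simp add: A_def)
  have x: "0 \<le> x"
    using prob_rule_nonneg[OF P v] by (simp add: x_def)
  have bound: "x * (1 + B M / A - 1 / real M) \<le> 1" if "n < M" for M
  proof -
    have BM: "B M = (\<Sum>q\<in>{..<M} - {n}. (cmod (v q))\<^sup>2)"
      using that by (simp add: B_def A_def sum_diff1)
    then have "0 \<le> B M"
      by (simp add: sum_nonneg)
    define l where "l = nat \<lfloor>real M * B M / A\<rfloor>"
    have "real l = of_int \<lfloor>real M * B M / A\<rfloor>"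
      using \<open>0 \<le> B M\<close> A by (simp add: l_def)
    then have l: "real l \<le> real M * B M / A" "real M * B M / A - 1 < real l"
      using of_int_floor_le[of "real M * B M / A"] real_of_int_floor_add_one_gt[of "real M * B M / A"]
      by linarith+
    have "real l * A \<le> real M * B M"
      using l(1) A by (simp add: pos_le_divide_eq)
    then have "x * (real M + real l) \<le> real M"
      using prob_split_bound[OF P A2 A3 v that, of M l] that BM by (simp add: A_def x_def)
    moreover have "x * (real M + real M * B M / A - 1) \<le> x * (real M + real l)"
      using l(2) x by (intro mult_left_mono) simp_all
    moreover have "x * (real M + real M * B M / A - 1) = real M * (x * (1 + B M / A - 1 / real M))"
      using that by (simp add: field_simps)
    ultimately have "real M * (x * (1 + B M / A - 1 / real M)) \<le> real M * 1"
      by simp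
    then show ?thesis
      using that by (simp add: mult_le_cancel_left_pos)
  qed
  have "B \<longlonglongrightarrow> sqnorm v - A"
    using v unfolding B_def sqnorm_def allowed_state_def sq_summable_def
    by (intro tendsto_diff summable_LIMSEQ tendsto_const) simp
  then have "(\<lambda>M. x * (1 + B M / A - 1 / real M)) \<longlonglongrightarrow> x * (1 + (sqnorm v - A) / A - 0)"
    using A by (intro tendsto_intros lim_inverse_n') simp_all
  then have "x * (1 + (sqnorm v - A) / A - 0) \<le> 1"
    by (rule LIMSEQ_le_const2) (use bound in \<open>auto intro: exI[of _ "Suc n"]\<close>)
  then show ?thesis
    using A by (simp add: field_simps x_def A_def)
qed

lemma sums_le_imp_eq:
  fixes f g :: "nat \<Rightarrow> real"
  assumes "\<And>k. f k \<le> g k" "f sums s" "g sums s"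
  shows "f = g"
proof -
  have "(\<lambda>k. g k - f k) sums 0"
    using sums_diff[OF assms(3,2)] by simp
  then have "\<forall>k. g k - f k = 0"
    using suminf_eq_zero_iff[of "\<lambda>k. g k - f k"] assms(1) by (simp add: sums_iff)
  then show ?thesis
    by (simp add: fun_eq_iff)
qed

theorem theorem3:
  fixes p :: "(nat \<Rightarrow> complex) \<Rightarrow> nat \<Rightarrow> real"
  assumes "prob_rule p" and "axiom_A2 p" and "axiom_A3 p"
  shows "\<forall>v n. allowed_state v \<longrightarrow> p v n = (cmod (v n))\<^sup>2 / sqnorm v"
proof (intro allI impI)
  fix v n
  assume v: "allowed_state v"
  then have S: "0 < sqnorm v"
    by (simp add: allowed_state_def)
  have "(\<lambda>k. (cmod (v k))\<^sup>2 / sqnorm v) sums (sqnorm v / sqnorm v)"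
    using v unfolding allowed_state_def sq_summable_def sqnorm_def
    by (intro sums_divide summable_sums) simp
  moreover have "p v k \<le> (cmod (v k))\<^sup>2 / sqnorm v" for k
    using prob_mul_sqnorm_le[OF assms v, of k] S by (simp add: pos_le_divide_eq)
  ultimately have "p v = (\<lambda>k. (cmod (v k))\<^sup>2 / sqnorm v)"
    using sums_le_imp_eq prob_rule_sums[OF assms(1) v] S by simp
  then show "p v n = (cmod (v n))\<^sup>2 / sqnorm v"
    by simp
qed

end
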